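(* Let $y\in\ell^2$. Suppose that for every $q\in\mathbb Q^{<\omega}$, every rational $\varepsilon>0$ and every $m\in\omega$ there exist $n\le k$ in $\omega$ with $n\ge m$ and $k-n\ge m$ such that $\lVert (2^n y\upharpoonright[k,k+|q|)) - q\rVert_\infty<\varepsilon|q|^{-1/2}$ and $\lVert y\upharpoonright[k+|q|,\infty)\rVert_2<\varepsilon 2^{-k}$. Then $y$ is nicely hypercyclic.
   Context: $\omega=\{0,1,2,\dots\}$; $\ell^2$ is the Hilbert space of square-summable real sequences indexed by $\omega$. For a (finite or infinite) real string $s$, $\lVert s\rVert_2$ and $\lVert s\rVert_\infty$ denote its $2$-norm and sup-norm, $|s|$ its length; $y\upharpoonright[k,k+|q|)$ is regarded as a string of length $|q|$ indexed from $0$ and compared to $q$ coordinatewise; when $q$ is empty, conditions comparing an empty string to $q$ in $\lVert\cdot\rVert_\infty$ are vacuous. For nonempty $q\in\mathbb Q^{<\omega}$ and rational $\varepsilon>0$, $U_{q,\varepsilon}=\{x\in\ell^2:\lVert (x\upharpoonright|q|)-q\rVert_\infty<\varepsilon|q|^{-1/2}\text{ and }\lVert x\upharpoonright[|q|,\infty)\rVert_2<\varepsilon\}$; for $q$ empty, $U_{q,\varepsilon}=\{x:\lVert x\rVert_2<\varepsilon\}$. For $w\in\mathbb R^\omega$, $B_w(x)(i)=w(i)x(i+1)$. A function $w$ on $\omega$ is $n$-nice at $k$ if $w(i)=w(k+i)$ for all $i<n$. $B_w^k$ maps $y$ nicely into $U_{q,\varepsilon}$ if $B_w^k(y)\in U_{q,\varepsilon}$,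 $w$ is $|q|$-nice at $k$, and $\lVert y\upharpoonright[k+|q|,\infty)\rVert_2<\varepsilon 2^{-k}$. $y$ is nicely hypercyclic for $w$ if for every $U_{q,\varepsilon}$ there is $k$ such that $B_w^k$ maps $y$ nicely into $U_{q,\varepsilon}$; $y$ is nicely hypercyclic if it is nicely hypercyclic for some $w\in\{1,2\}^\omega$. *)

theory Defs
  imports "HOL-Analysis.Analysis"
begin

definition l2 :: "(nat \<Rightarrow> real) \<Rightarrow> bool" where
  "l2 x \<longleftrightarrow> summable (\<lambda>i. (x i)\<^sup>2)"

definition tail_norm :: "(nat \<Rightarrow> real) \<Rightarrow> nat \<Rightarrow> real" where
  "tail_norm x n = sqrt (\<Sum>i. (x (i + n))\<^sup>2)"

definition block_close :: "(nat \<Rightarrow> real) \<Rightarrow> nat \<Rightarrow> rat list \<Rightarrow> real \<Rightarrow> bool" where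
  "block_close x k q \<epsilon> \<longleftrightarrow>
     (\<forall>i<length q. \<bar>x (k + i) - real_of_rat (q ! i)\<bar> < \<epsilon> / sqrt (real (length q)))"

text \<open>The basic open set U_{q,eps} (for empty q this is the open eps-ball around 0).\<close>
definition U :: "rat list \<Rightarrow> real \<Rightarrow> (nat \<Rightarrow> real) set" where
  "U q \<epsilon> = {x. l2 x \<and> block_close x 0 q \<epsilon> \<and> tail_norm x (length q) < \<epsilon>}"

definition B :: "(nat \<Rightarrow> real) \<Rightarrow> (nat \<Rightarrow> real) \<Rightarrow> (nat \<Rightarrow> real)" where
  "B w x = (\<lambda>i. w i * x (i + 1))"

definition nice :: "nat \<Rightarrow> (nat \<Rightarrow> real) \<Rightarrow> nat \<Rightarrow> bool" where
  "nice n w k \<longleftrightarrow> (\<forall>i<n. w i = w (k + i))"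

definition maps_nicely :: "(nat \<Rightarrow> real) \<Rightarrow> nat \<Rightarrow> (nat \<Rightarrow> real) \<Rightarrow> rat list \<Rightarrow> real \<Rightarrow> bool" where
  "maps_nicely w k y q \<epsilon> \<longleftrightarrow>
     (B w ^^ k) y \<in> U q \<epsilon> \<and> nice (length q) w k \<and> tail_norm y (k + length q) < \<epsilon> * 2 powi (- int k)"

definition nicely_hypercyclic_for :: "(nat \<Rightarrow> real) \<Rightarrow> (nat \<Rightarrow> real) \<Rightarrow> bool" where
  "nicely_hypercyclic_for w y \<longleftrightarrow>
     (\<forall>q (\<epsilon>::rat). \<epsilon> > 0 \<longrightarrow> (\<exists>k. maps_nicely w k y q (real_of_rat \<epsilon>)))"

definition nicely_hypercyclic :: "(nat \<Rightarrow> real) \<Rightarrow> bool" where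
  "nicely_hypercyclic y \<longleftrightarrow> (\<exists>w. (\<forall>i. w i \<in> {1, 2}) \<and> nicely_hypercyclic_for w y)"

end

theory Submission
  imports Defs
begin

text \<open>The weight \<open>w \<in> {1,2}\<^sup>\<omega>\<close> is built in stages, each fixing a longer finite prefix, one
  stage per requirement \<open>(q, \<epsilon>)\<close> in an enumeration. Given a prefix of length \<open>L\<close>, take \<open>n \<le> k\<close>
  from the hypothesis with \<open>n, k - n \<ge> L + |q|\<close>. The prefix has product \<open>2\<^sup>c\<close> with \<open>c \<le> L \<le> n\<close>,
  so padding it with \<open>n - c\<close> twos and then ones up to \<open>k\<close> gives \<open>w(0)\<cdots>w(k-1) = 2\<^sup>n\<close>; repeating
  \<open>w\<restriction>[0,|q|)\<close> on \<open>[k, k+|q|)\<close> makes \<open>w\<close> \<open>|q|\<close>-nice at \<open>k\<close>. Then the first \<open>|q|\<close> entries of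
  \<open>B\<^sub>w\<^sup>k y\<close> are those of \<open>2\<^sup>n y\<restriction>[k, k+|q|)\<close>, and its tail is at most \<open>2\<^sup>k\<close> times that of \<open>y\<close>,
  so \<open>B\<^sub>w\<^sup>k\<close> maps \<open>y\<close> nicely into \<open>U(q, \<epsilon>)\<close> for every weight extending the new prefix.\<close>

lemma funpow_B_apply: "(B w ^^ k) x i = (\<Prod>j<k. w (i + j)) * x (i + k)"
proof (induction k arbitrary: i)
  case 0
  then show ?case by simp
next
  case (Suc k)
  have "(\<Prod>j<Suc k. w (i + j)) = w i * (\<Prod>j<k. w (Suc i + j))"
    unfolding prod.lessThan_Suc_shift by simp
  then show ?case
    using Suc.IH[of "Suc i"] by (simp add: B_def)
qed

lemma prod_window_eq_if_periodic:
  fixes w :: "nat \<Rightarrow> 'a::comm_monoid_mult"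
  assumes "\<forall>i<N. w (k + i) = w i" and "i \<le> N"
  shows "(\<Prod>j<k. w (i + j)) = (\<Prod>j<k. w j)"
  using assms(2)
proof (induction i)
  case 0
  then show ?case by simp
next
  case (Suc i)
  show ?case
  proof (cases k)
    case 0
    then show ?thesis by simp
  next
    case (Suc k')
    have "(\<Prod>j<k. w (Suc i + j)) = (\<Prod>j<k'. w (Suc i + j)) * w (i + k)"
      using Suc by (simp add: ac_simps)
    also have "w (i + k) = w i"
      using assms(1) \<open>Suc i \<le> N\<close> by (simp add: add.commute)
    also have "(\<Prod>j<k'. w (Suc i + j)) * w i = (\<Prod>j<k. w (i + j))"
      unfolding Suc prod.lessThan_Suc_shift by (simp add: mult.commute)
    finally show ?thesis
      using Suc.IH \<open>Suc i \<le> N\<close> by simp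
  qed
qed

lemma l2_tail_norm_le_if_dominated:
  fixes x y :: "nat \<Rightarrow> real"
  assumes "l2 y" and "0 \<le> c" and "\<And>i. \<bar>x i\<bar> \<le> c * \<bar>y (i + k)\<bar>"
  shows "l2 x" and "tail_norm x t \<le> c * tail_norm y (t + k)"
proof -
  have sq_le: "(x i)\<^sup>2 \<le> c\<^sup>2 * (y (i + k))\<^sup>2" for i
    using assms(3)[of i] abs_ge_zero[of "x i"]
    by (metis abs_mult abs_of_nonneg assms(2) power_mono power_mult_distrib power2_abs)
  have shifted: "summable (\<lambda>i. (y (i + m))\<^sup>2)" for m
    using assms(1) unfolding l2_def by (subst summable_iff_shift)
  have dom: "summable (\<lambda>i. c\<^sup>2 * (y (i + m + k))\<^sup>2)" for m
    using shifted[of "m + k"] by (intro summable_mult) (simp add: ac_simps)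
  have x_shifted: "summable (\<lambda>i. (x (i + m))\<^sup>2)" for m
    by (rule summable_comparison_test[OF _ dom[of m]]) (use sq_le in auto)
  show "l2 x"
    using x_shifted[of 0] unfolding l2_def by simp
  have "(\<Sum>i. (x (i + t))\<^sup>2) \<le> (\<Sum>i. c\<^sup>2 * (y (i + t + k))\<^sup>2)"
    by (rule suminf_le) (use sq_le x_shifted dom in auto)
  also have "\<dots> = c\<^sup>2 * (\<Sum>i. (y (i + (t + k)))\<^sup>2)"
    using shifted[of "t + k"] by (simp add: suminf_mult ac_simps)
  finally show "tail_norm x t \<le> c * tail_norm y (t + k)"
    unfolding tail_norm_def using assms(2)
    by (metis real_sqrt_abs real_sqrt_le_mono real_sqrt_mult abs_of_nonneg)
qed

lemma maps_nicely_if_prod_eq_power: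
  assumes w12: "\<forall>j. w j \<in> {1, 2}" and "l2 y" and nice: "nice (length q) w k"
    and prod: "(\<Prod>j<k. w j) = 2 ^ n"
    and close: "block_close (\<lambda>i. 2 ^ n * y i) k q \<epsilon>"
    and tail: "tail_norm y (k + length q) < \<epsilon> * 2 powi (- int k)"
  shows "maps_nicely w k y q \<epsilon>"
proof -
  have w_bounds: "0 \<le> w j \<and> w j \<le> 2" for j
    using w12 by (metis insert_iff singletonD order_refl one_le_numeral zero_le_one zero_le_numeral)
  have window_le: "\<bar>\<Prod>j<k. w (i + j)\<bar> \<le> 2 ^ k" for i
  proof -
    have "(\<Prod>j<k. w (i + j)) \<le> 2 ^ k"
      by (rule prod_le_power) (use w_bounds in auto)
    moreover have "0 \<le> (\<Prod>j<k. w (i + j))"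
      by (rule prod_nonneg) (use w_bounds in auto)
    ultimately show ?thesis by simp
  qed
  have dominated: "\<bar>(B w ^^ k) y i\<bar> \<le> 2 ^ k * \<bar>y (i + k)\<bar>" for i
    unfolding funpow_B_apply abs_mult by (rule mult_right_mono[OF window_le]) simp
  note l2_shift = l2_tail_norm_le_if_dominated[OF \<open>l2 y\<close> _ dominated]
  have "tail_norm ((B w ^^ k) y) (length q) \<le> 2 ^ k * tail_norm y (k + length q)"
    using l2_shift(2)[of "length q"] by (simp add: add.commute)
  also have "\<dots> < 2 ^ k * (\<epsilon> * 2 powi (- int k))"
    using tail by simp
  also have "\<dots> = \<epsilon>"
    by (simp add: power_int_minus)
  finally have "tail_norm ((B w ^^ k) y) (length q) < \<epsilon>" .
  moreover have "block_close ((B w ^^ k) y) 0 q \<epsilon>"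
    unfolding block_close_def
  proof (intro allI impI)
    fix i assume "i < length q"
    then have "(\<Prod>j<k. w (i + j)) = 2 ^ n"
      using prod_window_eq_if_periodic[of "length q" w k i] nice prod by (simp add: nice_def)
    then show "\<bar>(B w ^^ k) y (0 + i) - real_of_rat (q ! i)\<bar> < \<epsilon> / sqrt (real (length q))"
      using close \<open>i < length q\<close> unfolding block_close_def funpow_B_apply by (simp add: add.commute)
  qed
  ultimately show ?thesis
    using l2_shift(1) nice tail unfolding maps_nicely_def U_def by simp
qed

lemma prod_one_two_eq_power:
  fixes w :: "nat \<Rightarrow> real"
  assumes "\<forall>j. w j \<in> {1, 2}" and "finite A"
  shows "\<exists>c\<le>card A. (\<Prod>j\<in>A. w j) = 2 ^ c"
  using assms(2)
proof (induction A rule: finite_induct)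
  case empty
  then show ?case by simp
next
  case (insert a A)
  then obtain c where "c \<le> card A" "(\<Prod>j\<in>A. w j) = 2 ^ c" by blast
  with insert assms(1)[rule_format, of a] show ?case
    by (auto intro: exI[of _ c] exI[of _ "Suc c"])
qed

lemma exists_weight_extension:
  fixes w :: "nat \<Rightarrow> real"
  assumes w12: "\<forall>j. w j \<in> {1, 2}" and "L \<le> n" and "L \<le> k - n" and "n \<le> k" and "N \<le> k"
  obtains v where "\<forall>j. v j \<in> {1, 2}" and "\<forall>j<L. v j = w j"
    and "(\<Prod>j<k. v j) = 2 ^ n" and "nice N v k"
proof -
  obtain c where "c \<le> L" and prefix: "(\<Prod>j<L. w j) = 2 ^ c"
    using prod_one_two_eq_power[OF w12, of "{..<L}"] by auto
  define d where "d = n - c"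
  have "L + d \<le> k" and "c + d = n"
    using assms \<open>c \<le> L\<close> unfolding d_def by auto
  define u where "u j = (if j < L then w j else if j < L + d then 2 else 1)" for j
  define v where "v j = (if j < k then u j else u (j - k))" for j
  have "(\<Prod>j<k. v j) = (\<Prod>j\<in>{0..<L}. u j) * (\<Prod>j\<in>{L..<L + d}. u j) * (\<Prod>j\<in>{L + d..<k}. u j)"
    using \<open>L + d \<le> k\<close> by (simp add: v_def atLeast0LessThan[symmetric] prod.atLeastLessThan_concat)
  also have "\<dots> = 2 ^ c * 2 ^ d"
    using prefix by (simp add: u_def atLeast0LessThan)
  finally have "(\<Prod>j<k. v j) = 2 ^ n"
    by (simp add: \<open>c + d = n\<close>[symmetric] power_add)
  moreover have "\<forall>j. v j \<in> {1, 2}" and "\<forall>j<L. v j = w j" and "nice N v k"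
    using w12 assms unfolding v_def u_def nice_def by auto
  ultimately show thesis
    using that by blast
qed

definition forces_maps_nicely :: "(nat \<Rightarrow> real) \<Rightarrow> rat list \<Rightarrow> real \<Rightarrow> nat \<Rightarrow> (nat \<Rightarrow> real) \<Rightarrow> bool" where
  "forces_maps_nicely y q \<epsilon> L w \<longleftrightarrow>
     (\<forall>v. (\<forall>j. v j \<in> {1, 2}) \<longrightarrow> (\<forall>j<L. v j = w j) \<longrightarrow> (\<exists>k. maps_nicely v k y q \<epsilon>))"

lemma exists_extension_forcing:
  fixes y w :: "nat \<Rightarrow> real" and \<epsilon> :: rat
  assumes "l2 y"
    and hyp: "\<forall>(q::rat list) (\<epsilon>::rat) (m::nat). \<epsilon> > 0 \<longrightarrow>
          (\<exists>n k. n \<le> k \<and> m \<le> n \<and> m \<le> k - n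
             \<and> block_close (\<lambda>i. 2 ^ n * y i) k q (real_of_rat \<epsilon>)
             \<and> tail_norm y (k + length q) < real_of_rat \<epsilon> * 2 powi (- int k))"
    and w12: "\<forall>j. w j \<in> {1, 2}"
  shows "\<exists>L' v. L < L' \<and> (\<forall>j. v j \<in> {1, 2}) \<and> (\<forall>j<L. v j = w j)
           \<and> (0 < \<epsilon> \<longrightarrow> forces_maps_nicely y q (real_of_rat \<epsilon>) L' v)"
proof (cases "0 < \<epsilon>")
  case False
  then show ?thesis
    using w12 by (intro exI[of _ "Suc L"] exI[of _ w]) auto
next
  case True
  then obtain n k where "n \<le> k" "L + length q \<le> n" "L + length q \<le> k - n"
    and close: "block_close (\<lambda>i. 2 ^ n * y i) k q (real_of_rat \<epsilon>)"
    and tail: "tail_norm y (k + length q) < real_of_rat \<epsilon> * 2 powi (- int k)"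
    using hyp by blast
  then obtain v where v12: "\<forall>j. v j \<in> {1, 2}" and "\<forall>j<L. v j = w j"
    and prod: "(\<Prod>j<k. v j) = 2 ^ n" and nice: "nice (length q) v k"
    using exists_weight_extension[OF w12, of L n k "length q"] by auto
  have "forces_maps_nicely y q (real_of_rat \<epsilon>) (Suc (k + length q)) v"
    unfolding forces_maps_nicely_def
  proof (intro allI impI)
    fix u assume u12: "\<forall>j. u j \<in> {1, 2}" and agree: "\<forall>j<Suc (k + length q). u j = v j"
    have "(\<Prod>j<k. u j) = 2 ^ n"
      using prod agree by simp
    moreover have "nice (length q) u k"
      using nice agree \<open>L + length q \<le> n\<close> \<open>n \<le> k\<close> by (simp add: nice_def)
    ultimately show "\<exists>k. maps_nicely u k y q (real_of_rat \<epsilon>)"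
      using maps_nicely_if_prod_eq_power[OF u12 \<open>l2 y\<close> _ _ close tail] by blast
  qed
  then show ?thesis
    using v12 \<open>\<forall>j<L. v j = w j\<close> \<open>L + length q \<le> n\<close> \<open>n \<le> k\<close>
    by (intro exI[of _ "Suc (k + length q)"] exI[of _ v]) auto
qed

lemma limit_of_coherent_prefixes:
  fixes L :: "nat \<Rightarrow> nat" and w :: "nat \<Rightarrow> nat \<Rightarrow> 'a"
  assumes "strict_mono L" and coherent: "\<forall>s. \<forall>j<L s. w (Suc s) j = w s j"
  shows "\<forall>s. \<forall>j<L s. w (Suc j) j = w s j"
proof (intro allI impI)
  have later: "\<forall>j<L s. w t j = w s j" if "s \<le> t" for s t
    using that
  proof (induction t rule: dec_induct)
    case (step t)
    have "L s \<le> L t"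
      using \<open>strict_mono L\<close> step.hyps(1) by (simp add: strict_mono_less_eq)
    then show ?case
      using step coherent by simp
  qed simp
  fix s j assume "j < L s"
  show "w (Suc j) j = w s j"
  proof (cases "s \<le> Suc j")
    case True
    then show ?thesis using later \<open>j < L s\<close> by simp
  next
    case False
    have "j < L (Suc j)"
      using strict_mono_imp_increasing[OF \<open>strict_mono L\<close>, of "Suc j"] by simp
    then show ?thesis using later[of "Suc j" s] False by simp
  qed
qed

theorem lemma8:
  fixes y :: "nat \<Rightarrow> real"
  assumes "l2 y"
    and "\<forall>(q::rat list) (\<epsilon>::rat) (m::nat). \<epsilon> > 0 \<longrightarrow>
          (\<exists>n k. n \<le> k \<and> m \<le> n \<and> m \<le> k - n
             \<and> block_close (\<lambda>i. 2 ^ n * y i) k q (real_of_rat \<epsilon>)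
             \<and> tail_norm y (k + length q) < real_of_rat \<epsilon> * 2 powi (- int k))"
  shows "nicely_hypercyclic y"
proof -
  let ?req = "\<lambda>s. from_nat s :: rat list \<times> rat"
  let ?Q = "\<lambda>s x x'. fst x < fst x' \<and> (\<forall>j<fst x. snd x' j = snd x j)
     \<and> (0 < snd (?req s) \<longrightarrow> forces_maps_nicely y (fst (?req s)) (real_of_rat (snd (?req s))) (fst x') (snd x'))"
  have init: "\<exists>x :: nat \<times> (nat \<Rightarrow> real). \<forall>j. snd x j \<in> {1, 2}"
    by (intro exI[of _ "(0, \<lambda>_. 1)"]) simp
  have step: "\<exists>x'. (\<forall>j. snd x' j \<in> {1, 2}) \<and> ?Q s x x'" if "\<forall>j. snd x j \<in> {1, 2}" for x s
    using exists_extension_forcing[OF assms that, of "fst x" "snd (?req s)" "fst (?req s)"] by auto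
  obtain f :: "nat \<Rightarrow> nat \<times> (nat \<Rightarrow> real)"
    where f: "\<forall>s. (\<forall>j. snd (f s) j \<in> {1, 2}) \<and> ?Q s (f s) (f (Suc s))"
    using dependent_nat_choice[where Q = ?Q, OF init step] by blast
  define W where "W j = snd (f (Suc j)) j" for j
    \<comment> \<open>the prefix of stage \<open>Suc j\<close> is longer than \<open>j\<close>, so it already fixes \<open>W j\<close>\<close>
  have "strict_mono (fst \<circ> f)"
    using f by (simp add: strict_mono_Suc_iff)
  then have agree: "\<forall>j<fst (f s). W j = snd (f s) j" for s
    using limit_of_coherent_prefixes[of "fst \<circ> f" "snd \<circ> f"] f by (simp add: W_def)
  have W12: "\<forall>j. W j \<in> {1, 2}"
    using f by (simp add: W_def)
  have "nicely_hypercyclic_for W y"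
    unfolding nicely_hypercyclic_for_def
  proof (intro allI impI)
    fix q and \<epsilon> :: rat assume "0 < \<epsilon>"
    then show "\<exists>k. maps_nicely W k y q (real_of_rat \<epsilon>)"
      using f[rule_format, of "to_nat (q, \<epsilon>)"] W12 agree unfolding forces_maps_nicely_def by simp
  qed
  then show ?thesis
    unfolding nicely_hypercyclic_def using W12 by blast
qed

end
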